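(* Let $D\ge 1$. Any (randomized) voting rule that has access only to the top-$t$ prefix of each agent's ranking and achieves metric distortion at most $D$ has utilitarian distortion $\Omega\!\left(\frac{m\sqrt m}{D\,t\sqrt t}\right)$.
   Context: Setting: $n$ agents, $m$ alternatives; each agent has an underlying strict ranking, but the rule only receives each agent's ordered list of her top $t$ alternatives (a top-$t$ profile $\vec\sigma_t$) and outputs a probability distribution over alternatives. A full profile extends $\vec\sigma_t$ if each agent's top-$t$ prefix coincides with that in $\vec\sigma_t$. Metric framework: a pseudometric $d$ on agents and alternatives is consistent with a full profile $\vec\sigma$ if $X\succ_iY\Rightarrow d(i,X)\le d(i,Y)$, and consistent with $\vec\sigma_t$ if it is consistent with some full profile extending $\vec\sigma_t$. $\mathrm{SC}(X,d)=\sum_id(i,X)$. Metric distortion of a rule $f$: $\sup_{\vec\sigma_t}\sup_{d}\mathbb E_{X\sim f(\vec\sigma_t)}[\mathrm{SC}(X,d)]/\min_X\mathrm{SC}(X,d)$ over consistent $d$. Utilitarian framework: unit-sum nonnegative utilities $u_i$ ($\sum_Xu_i(X)=1$), consistent with a full profile if $X\succ_iY\Rightarrow u_i(X)\ge u_i(Y)$ and with $\vec\sigma_t$ if consistent with some full extension. $\mathrm{SW}(X,\vec u)=\sum_iu_i(X)$. Utilitarian distortion: $\sup_{\vec\sigma_t}\sup_{\vec u}\max_X\mathrm{SW}(X,\vec u)/\mathbb E_{X\sim f(\vec\sigma_t)}[\mathrm{SW}(X,\vec u)]$. *)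

theory Defs
  imports Complex_Main "HOL-Library.Extended_Real"
begin

text \<open>Alternatives are the naturals 0..<m; agents are 0..<n.
  A ranking of agent i is a list (best first) that is a permutation of [0..<m].
  A top-t profile is a list of n lists (one per agent), each being the ordered
  list of the agent's top t alternatives.\<close>

definition is_ranking :: "nat \<Rightarrow> nat list \<Rightarrow> bool" where
  "is_ranking m l \<longleftrightarrow> distinct l \<and> set l = {..<m}"

definition full_profile :: "nat \<Rightarrow> nat list list \<Rightarrow> bool" where
  "full_profile m \<sigma> \<longleftrightarrow> (\<forall>l\<in>set \<sigma>. is_ranking m l)"

definition top_profile :: "nat \<Rightarrow> nat \<Rightarrow> nat list list \<Rightarrow> bool" where
  "top_profile m t \<tau> \<longleftrightarrow>
     (\<forall>l\<in>set \<tau>. length l = t \<and> distinct l \<and> set l \<subseteq> {..<m})"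

definition extends :: "nat \<Rightarrow> nat list list \<Rightarrow> nat list list \<Rightarrow> bool" where
  "extends t \<sigma> \<tau> \<longleftrightarrow> length \<sigma> = length \<tau> \<and>
     (\<forall>i<length \<tau>. take t (\<sigma> ! i) = \<tau> ! i)"

definition is_rule :: "nat \<Rightarrow> nat \<Rightarrow> (nat list list \<Rightarrow> nat \<Rightarrow> real) \<Rightarrow> bool" where
  "is_rule m t f \<longleftrightarrow> (\<forall>\<tau>. top_profile m t \<tau> \<longrightarrow>
      (\<forall>X. f \<tau> X \<ge> 0) \<and> (\<forall>X\<ge>m. f \<tau> X = 0) \<and> (\<Sum>X<m. f \<tau> X) = 1)"

text \<open>Points: agents are Inl i, alternatives are Inr X.\<close>
definition points :: "nat \<Rightarrow> nat \<Rightarrow> (nat + nat) set" where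
  "points n m = Inl ` {..<n} \<union> Inr ` {..<m}"

definition pseudometric_on :: "(nat + nat) set \<Rightarrow> ((nat + nat) \<Rightarrow> (nat + nat) \<Rightarrow> real) \<Rightarrow> bool" where
  "pseudometric_on S d \<longleftrightarrow>
     (\<forall>x\<in>S. d x x = 0) \<and>
     (\<forall>x\<in>S. \<forall>y\<in>S. d x y \<ge> 0 \<and> d x y = d y x) \<and>
     (\<forall>x\<in>S. \<forall>y\<in>S. \<forall>z\<in>S. d x z \<le> d x y + d y z)"

definition metric_consistent_full ::
  "nat \<Rightarrow> nat list list \<Rightarrow> ((nat + nat) \<Rightarrow> (nat + nat) \<Rightarrow> real) \<Rightarrow> bool" where
  "metric_consistent_full m \<sigma> d \<longleftrightarrow>
     pseudometric_on (points (length \<sigma>) m) d \<and>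
     (\<forall>i<length \<sigma>. \<forall>a b. a < b \<and> b < m \<longrightarrow>
        d (Inl i) (Inr (\<sigma> ! i ! a)) \<le> d (Inl i) (Inr (\<sigma> ! i ! b)))"

definition metric_consistent ::
  "nat \<Rightarrow> nat \<Rightarrow> nat list list \<Rightarrow> ((nat + nat) \<Rightarrow> (nat + nat) \<Rightarrow> real) \<Rightarrow> bool" where
  "metric_consistent m t \<tau> d \<longleftrightarrow>
     (\<exists>\<sigma>. full_profile m \<sigma> \<and> extends t \<sigma> \<tau> \<and> metric_consistent_full m \<sigma> d)"

definition SC :: "nat \<Rightarrow> ((nat + nat) \<Rightarrow> (nat + nat) \<Rightarrow> real) \<Rightarrow> nat \<Rightarrow> real" where
  "SC n d X = (\<Sum>i<n. d (Inl i) (Inr X))"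

definition metric_distortion ::
  "nat \<Rightarrow> nat \<Rightarrow> (nat list list \<Rightarrow> nat \<Rightarrow> real) \<Rightarrow> ereal" where
  "metric_distortion m t f =
     (SUP p \<in> {(\<tau>, d). top_profile m t \<tau> \<and> \<tau> \<noteq> [] \<and> metric_consistent m t \<tau> d}.
        (case p of (\<tau>, d) \<Rightarrow>
          ereal (\<Sum>X<m. f \<tau> X * SC (length \<tau>) d X) /
          ereal (Min ((SC (length \<tau>) d) ` {..<m}))))"

definition util_consistent_full ::
  "nat \<Rightarrow> nat list list \<Rightarrow> (nat \<Rightarrow> nat \<Rightarrow> real) \<Rightarrow> bool" where
  "util_consistent_full m \<sigma> u \<longleftrightarrow>
     (\<forall>i<length \<sigma>. (\<forall>X<m. u i X \<ge> 0) \<and> (\<Sum>X<m. u i X) = 1 \<and>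
        (\<forall>a b. a < b \<and> b < m \<longrightarrow> u i (\<sigma> ! i ! a) \<ge> u i (\<sigma> ! i ! b)))"

definition util_consistent ::
  "nat \<Rightarrow> nat \<Rightarrow> nat list list \<Rightarrow> (nat \<Rightarrow> nat \<Rightarrow> real) \<Rightarrow> bool" where
  "util_consistent m t \<tau> u \<longleftrightarrow>
     (\<exists>\<sigma>. full_profile m \<sigma> \<and> extends t \<sigma> \<tau> \<and> util_consistent_full m \<sigma> u)"

definition SW :: "nat \<Rightarrow> (nat \<Rightarrow> nat \<Rightarrow> real) \<Rightarrow> nat \<Rightarrow> real" where
  "SW n u X = (\<Sum>i<n. u i X)"

definition util_distortion ::
  "nat \<Rightarrow> nat \<Rightarrow> (nat list list \<Rightarrow> nat \<Rightarrow> real) \<Rightarrow> ereal" where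
  "util_distortion m t f =
     (SUP p \<in> {(\<tau>, u). top_profile m t \<tau> \<and> \<tau> \<noteq> [] \<and> util_consistent m t \<tau> u}.
        (case p of (\<tau>, u) \<Rightarrow>
          ereal (Max ((SW (length \<tau>) u) ` {..<m})) /
          ereal (\<Sum>X<m. f \<tau> X * SW (length \<tau>) u X)))"

end

theory Submission
  imports Defs
begin

text \<open>
  The hard instance has \<open>k\<close> groups of \<open>b\<close> ``majority'' agents, group \<open>j\<close> listing block \<open>j\<close> of
  \<open>t\<close> alternatives as its top-\<open>t\<close>, and \<open>k\<close> ``loners'', each alone with its own block; all remaining
  alternatives are ``outside''. Two completions of this top-\<open>t\<close> profile are used. In the metric one,
  the majority agents and their blocks form one cluster, each loner with its block another, and the
  outside alternatives lie at distance \<open>R = D k (t + m - 2kt)\<close> from everyone: a rule of metric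
  distortion \<open>D\<close> must then put mass at most \<open>D/b\<close> on the loners' blocks and almost none outside.
  In the utilitarian one, every majority agent spreads its utility evenly over its block and all outside
  alternatives, and every loner over its block and the first outside alternative, which thus has welfare
  about \<open>k/t\<close>, while the rule's expected welfare is \<open>O(b/m + D/(b t))\<close>. Taking
  \<open>k \<approx> m/(3t)\<close> and \<open>b \<approx> \<surd>(m/t)\<close> gives the ratio \<open>\<Omega>(m\<surd>m / (D t\<surd>t))\<close>; for \<open>m < 6t\<close> the
  bound is below the trivial utilitarian distortion \<open>1\<close>.
\<close>

lemma div_eq_iff_bounds:
  fixes X t g :: nat
  assumes "0 < t"
  shows "X div t = g \<longleftrightarrow> g * t \<le> X \<and> X < g * t + t"
  using less_eq_div_iff_mult_less_eq[OF assms, of g X] div_less_iff_less_mult[OF assms, of X "Suc g"]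
  by auto

lemma card_div_eq:
  fixes b j k :: nat
  assumes "0 < b" "j < k"
  shows "card {i \<in> {..<k * b}. i div b = j} = b"
proof -
  have "j * b + b \<le> k * b"
    using mult_le_mono1[of "Suc j" k b] assms(2) by simp
  then have "{i \<in> {..<k * b}. i div b = j} = {j * b..<j * b + b}"
    using div_eq_iff_bounds[OF assms(1)] by auto
  then show ?thesis by simp
qed

lemma sum_lessThan_split: "a \<le> c \<Longrightarrow> sum g {..<c} = sum g {..<a} + sum g {a..<c}" for a c :: nat
  using sum.atLeastLessThan_concat[of 0 a c g] by (simp add: atLeast0LessThan)

lemma sum_if_const:
  fixes c :: "'b::semiring_1"
  assumes "finite A"
  shows "(\<Sum>x\<in>A. if P x then c else 0) = of_nat (card {x \<in> A. P x}) * c"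
  using assms by (simp add: sum.inter_filter[symmetric])

definition completed_ranking :: "nat \<Rightarrow> nat list \<Rightarrow> nat list \<Rightarrow> nat list" where
  "completed_ranking m xs ys = xs @ ys @ filter (\<lambda>x. x \<notin> set xs \<union> set ys) [0..<m]"

lemma is_ranking_completed_ranking:
  assumes "distinct xs" "distinct ys" "set xs \<inter> set ys = {}" "set xs \<union> set ys \<subseteq> {..<m}"
  shows "is_ranking m (completed_ranking m xs ys)"
  using assms unfolding is_ranking_def completed_ranking_def by auto

lemma is_ranking_length: "is_ranking m l \<Longrightarrow> length l = m"
  unfolding is_ranking_def using distinct_card by fastforce

lemma take_completed_ranking: "take (length xs) (completed_ranking m xs ys) = xs"
  by (simp add: completed_ranking_def)

lemma antitone_nth_append_step:
  fixes v :: "nat \<Rightarrow> real"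
  assumes "\<forall>x\<in>set ys. v x = c" "\<forall>x\<in>set zs. v x = 0" "0 \<le> c" "a < b" "b < length (ys @ zs)"
  shows "v ((ys @ zs) ! b) \<le> v ((ys @ zs) ! a)"
proof (cases "b < length ys")
  case True
  then show ?thesis using assms by (simp add: nth_append)
next
  case False
  then show ?thesis
    using assms nth_mem[of a "ys @ zs"] by (auto simp: nth_append split: if_splits)
qed

lemma mono_nth_append_filter_upt:
  fixes v :: "nat \<Rightarrow> real"
  assumes "\<forall>x\<in>set xs. v x = 0" "\<forall>x. 0 \<le> v x"
    and "\<And>x y. P x \<Longrightarrow> P y \<Longrightarrow> x \<le> y \<Longrightarrow> v x \<le> v y"
    and "a < b" "b < length (xs @ filter P [0..<m])"
  shows "v ((xs @ filter P [0..<m]) ! a) \<le> v ((xs @ filter P [0..<m]) ! b)"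
proof (cases "a < length xs")
  case True
  then show ?thesis using assms by (simp add: nth_append)
next
  case False
  let ?F = "filter P [0..<m]" and ?a = "a - length xs" and ?b = "b - length xs"
  have ab: "?a < ?b" "?b < length ?F"
    using False assms by auto
  have "?F ! ?a < ?F ! ?b"
    by (rule sorted_wrt_nth_less[OF _ ab]) (simp add: sorted_wrt_filter)
  moreover have "?F ! ?a \<in> set ?F" "?F ! ?b \<in> set ?F"
    using ab by (simp_all del: set_filter)
  then have "P (?F ! ?a)" "P (?F ! ?b)"
    by simp_all
  ultimately have "v (?F ! ?a) \<le> v (?F ! ?b)"
    using assms(3) by simp
  then show ?thesis using False assms(4) by (simp add: nth_append)
qed

definition completion :: "nat \<Rightarrow> nat list list \<Rightarrow> (nat \<Rightarrow> nat list) \<Rightarrow> nat list list" where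
  "completion m \<tau> ys = map (\<lambda>i. completed_ranking m (\<tau> ! i) (ys i)) [0..<length \<tau>]"

definition prefix_uniform :: "nat list list \<Rightarrow> (nat \<Rightarrow> nat list) \<Rightarrow> nat \<Rightarrow> nat \<Rightarrow> real" where
  "prefix_uniform \<tau> ys i X =
     (if X \<in> set (\<tau> ! i) \<union> set (ys i) then 1 / real (length (\<tau> ! i) + length (ys i)) else 0)"

locale top_profile_padding =
  fixes m t :: nat and \<tau> :: "nat list list" and ys :: "nat \<Rightarrow> nat list"
  assumes top_profile: "top_profile m t \<tau>"
    and distinct_padding: "\<And>i. i < length \<tau> \<Longrightarrow> distinct (ys i)"
    and padding_bounded: "\<And>i. i < length \<tau> \<Longrightarrow> set (ys i) \<subseteq> {..<m}"
    and padding_disjoint: "\<And>i. i < length \<tau> \<Longrightarrow> set (\<tau> ! i) \<inter> set (ys i) = {}"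
begin

lemma top_profile_nth:
  assumes "i < length \<tau>"
  shows "length (\<tau> ! i) = t" "distinct (\<tau> ! i)" "set (\<tau> ! i) \<subseteq> {..<m}"
  using top_profile assms unfolding top_profile_def by auto

lemma full_profile_completion: "full_profile m (completion m \<tau> ys)"
proof -
  have "is_ranking m (completed_ranking m (\<tau> ! i) (ys i))" if "i < length \<tau>" for i
    using top_profile_nth[OF that] distinct_padding[OF that] padding_bounded[OF that]
      padding_disjoint[OF that]
    by (intro is_ranking_completed_ranking) auto
  then show ?thesis
    unfolding full_profile_def completion_def by auto
qed

lemma extends_completion: "extends t (completion m \<tau> ys) \<tau>"
  unfolding extends_def completion_def
  by simp (metis take_completed_ranking top_profile_nth(1))

lemma length_completion_nth:
  assumes "i < length \<tau>"
  shows "length (completion m \<tau> ys ! i) = m"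
proof -
  have "completion m \<tau> ys ! i \<in> set (completion m \<tau> ys)"
    using assms by (simp add: completion_def)
  then show ?thesis
    using full_profile_completion is_ranking_length unfolding full_profile_def by blast
qed

lemma sum_prefix_uniform:
  assumes "1 \<le> t" "i < length \<tau>"
  shows "(\<Sum>X<m. prefix_uniform \<tau> ys i X) = 1"
proof -
  let ?S = "set (\<tau> ! i) \<union> set (ys i)" and ?N = "length (\<tau> ! i) + length (ys i)"
  have card_S: "card ?S = ?N"
    using top_profile_nth[OF assms(2)] distinct_padding[OF assms(2)] padding_disjoint[OF assms(2)]
    by (simp add: card_Un_disjoint distinct_card)
  have N: "0 < ?N"
    using top_profile_nth[OF assms(2)] assms(1) by simp
  have "(\<Sum>X<m. prefix_uniform \<tau> ys i X) = (\<Sum>X\<in>?S. 1 / real ?N)"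
    unfolding prefix_uniform_def
    using top_profile_nth[OF assms(2)] padding_bounded[OF assms(2)]
    by (intro sum.mono_neutral_cong_right) auto
  also have "\<dots> = 1"
    using card_S N by (simp del: of_nat_add)
  finally show ?thesis .
qed

lemma prefix_uniform_antitone:
  assumes i: "i < length \<tau>" and ab: "a < b" "b < m"
  shows "prefix_uniform \<tau> ys i (completion m \<tau> ys ! i ! b)
    \<le> prefix_uniform \<tau> ys i (completion m \<tau> ys ! i ! a)"
proof -
  let ?S = "set (\<tau> ! i) \<union> set (ys i)" and ?N = "length (\<tau> ! i) + length (ys i)"
  let ?F = "filter (\<lambda>x. x \<notin> ?S) [0..<m]"
  have ranking: "completion m \<tau> ys ! i = (\<tau> ! i @ ys i) @ ?F"
    using i by (simp add: completion_def completed_ranking_def)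
  have "prefix_uniform \<tau> ys i (((\<tau> ! i @ ys i) @ ?F) ! b)
      \<le> prefix_uniform \<tau> ys i (((\<tau> ! i @ ys i) @ ?F) ! a)"
  proof (rule antitone_nth_append_step[where c = "1 / real ?N"])
    show "b < length ((\<tau> ! i @ ys i) @ ?F)"
      using ab ranking length_completion_nth[OF i] by simp
  qed (use ab in \<open>simp_all add: prefix_uniform_def\<close>)
  then show ?thesis by (simp only: ranking)
qed

lemma util_consistent_prefix_uniform:
  assumes "1 \<le> t"
  shows "util_consistent m t \<tau> (prefix_uniform \<tau> ys)"
  unfolding util_consistent_def
proof (intro exI[of _ "completion m \<tau> ys"] conjI full_profile_completion extends_completion)
  show "util_consistent_full m (completion m \<tau> ys) (prefix_uniform \<tau> ys)"
    unfolding util_consistent_full_def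
    using sum_prefix_uniform[OF assms] prefix_uniform_antitone
    by (auto simp: completion_def prefix_uniform_def)
qed

end

lemma expected_SC_le_metric_distortion:
  assumes md: "metric_distortion m t f \<le> ereal D" and D: "0 \<le> D"
    and \<tau>: "top_profile m t \<tau>" "\<tau> \<noteq> []" and d: "metric_consistent m t \<tau> d"
    and pos: "\<And>Y. Y < m \<Longrightarrow> 0 < SC (length \<tau>) d Y" and X: "X < m"
  shows "(\<Sum>Y<m. f \<tau> Y * SC (length \<tau>) d Y) \<le> D * SC (length \<tau>) d X"
proof -
  let ?SC = "SC (length \<tau>) d"
  define E where "E = (\<Sum>Y<m. f \<tau> Y * ?SC Y)"
  define M where "M = Min (?SC ` {..<m})"
  have "M \<in> ?SC ` {..<m}"
    unfolding M_def using X by (intro Min_in) auto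
  then have "0 < M" using pos by auto
  have "M \<le> ?SC X"
    unfolding M_def using X by (intro Min_le) auto
  have "ereal E / ereal M \<le> metric_distortion m t f"
    unfolding metric_distortion_def M_def E_def
    by (rule SUP_upper2[where i = "(\<tau>, d)"]) (use \<tau> d in auto)
  then have "ereal (E / M) \<le> metric_distortion m t f"
    using \<open>0 < M\<close> by simp
  then have "ereal (E / M) \<le> ereal D"
    using md by (rule order_trans)
  then have "E / M \<le> D"
    by simp
  with \<open>0 < M\<close> have "E \<le> D * M"
    by (simp add: divide_le_eq)
  also have "\<dots> \<le> D * ?SC X"
    using \<open>M \<le> ?SC X\<close> D by (rule mult_left_mono)
  finally show ?thesis unfolding E_def .
qed

lemma util_distortion_ge_ratio:
  assumes rule: "is_rule m t f" and \<tau>: "top_profile m t \<tau>" "\<tau> \<noteq> []"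
    and u: "util_consistent m t \<tau> u"
    and X: "X < m" and S: "0 < S" "S \<le> SW (length \<tau>) u X"
    and Q: "(\<Sum>Y<m. f \<tau> Y * SW (length \<tau>) u Y) \<le> Q"
  shows "ereal (S / Q) \<le> util_distortion m t f"
proof -
  let ?SW = "SW (length \<tau>) u"
  define E where "E = (\<Sum>Y<m. f \<tau> Y * ?SW Y)"
  define M where "M = Max (?SW ` {..<m})"
  have "S \<le> M"
    unfolding M_def using S X by (intro order_trans[OF _ Max_ge]) auto
  have "\<forall>Y<m. 0 \<le> ?SW Y"
    using u unfolding util_consistent_def util_consistent_full_def extends_def SW_def
    by (auto intro!: sum_nonneg)
  moreover have "\<forall>Y. 0 \<le> f \<tau> Y"
    using rule \<tau>(1) unfolding is_rule_def by blast
  ultimately have "0 \<le> E"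
    unfolding E_def by (auto intro!: sum_nonneg)
  have "ereal (S / Q) \<le> ereal M / ereal E"
  proof (cases "E = 0")
    case True
    then show ?thesis using \<open>S \<le> M\<close> S by simp
  next
    case False
    with \<open>0 \<le> E\<close> have "0 < E" by simp
    then have "S / Q \<le> M / E"
      using \<open>S \<le> M\<close> S Q by (intro frac_le) (auto simp: E_def)
    then show ?thesis using \<open>0 < E\<close> by simp
  qed
  also have "ereal M / ereal E \<le> util_distortion m t f"
    unfolding util_distortion_def M_def E_def
    by (rule SUP_upper2[where i = "(\<tau>, u)"]) (use \<tau> u in auto)
  finally show ?thesis .
qed

lemma util_distortion_ge_one:
  assumes t: "1 \<le> t" "t \<le> m" and rule: "is_rule m t f"
  shows "1 \<le> util_distortion m t f"
proof -
  let ?\<tau> = "[[0..<t]]" and ?ys = "\<lambda>_. [t..<m]"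
  have top: "top_profile m t ?\<tau>"
    unfolding top_profile_def using t by auto
  interpret top_profile_padding m t ?\<tau> ?ys
    by unfold_locales (use top in auto)
  have uniform: "SW (length ?\<tau>) (prefix_uniform ?\<tau> ?ys) X = 1 / real m" if "X < m" for X
    using that t by (simp add: SW_def prefix_uniform_def)
  have "(\<Sum>X<m. f ?\<tau> X) = 1"
    using rule top unfolding is_rule_def by blast
  then have "(\<Sum>X<m. f ?\<tau> X * SW (length ?\<tau>) (prefix_uniform ?\<tau> ?ys) X) = 1 / real m"
    using uniform by (simp add: sum_divide_distrib[symmetric])
  then have "ereal ((1 / real m) / (1 / real m)) \<le> util_distortion m t f"
    using t uniform[of 0] util_consistent_prefix_uniform
    by (intro util_distortion_ge_ratio[OF rule top, where X = 0]) auto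
  then show ?thesis using t by (simp add: one_ereal_def)
qed

definition cluster_metric :: "('a \<Rightarrow> 'c) \<Rightarrow> 'c \<Rightarrow> real \<Rightarrow> 'a \<Rightarrow> 'a \<Rightarrow> real" where
  "cluster_metric cl far R p q =
     (if cl p = cl q then 0 else if cl p = far \<or> cl q = far then R else 1)"

lemma pseudometric_cluster_metric: "1 \<le> R \<Longrightarrow> pseudometric_on S (cluster_metric cl far R)"
  unfolding pseudometric_on_def cluster_metric_def by auto

section \<open>The hard instance\<close>

locale hard_instance =
  fixes k b t m :: nat
  assumes k_pos: "1 \<le> k" and b_pos: "1 \<le> b" and t_pos: "1 \<le> t" and room: "2 * k * t < m"
begin

abbreviation num_agents :: nat where
  "num_agents \<equiv> k * b + k"

abbreviation width :: nat where
  "width \<equiv> t + (m - 2 * k * t)"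

text \<open>Agents \<open>i < k b\<close> form the majority, in groups \<open>i div b\<close>; the loners \<open>k b + j\<close> (\<open>j < k\<close>) own
  the blocks \<open>k + j\<close>. Alternative \<open>X\<close> lies in block \<open>X div t\<close>, so the alternatives \<open>X \<ge> 2 k t\<close>
  are in no agent's top-\<open>t\<close>.\<close>

definition agent_block :: "nat \<Rightarrow> nat" where
  "agent_block i = (if i < k * b then i div b else k + (i - k * b))"

definition block :: "nat \<Rightarrow> nat list" where
  "block g = [g * t..<g * t + t]"

definition profile :: "nat list list" where
  "profile = map (\<lambda>i. block (agent_block i)) [0..<num_agents]"

lemma length_block [simp]: "length (block g) = t"
  by (simp add: block_def)

lemma mem_block: "X \<in> set (block g) \<longleftrightarrow> X div t = g"
  using div_eq_iff_bounds[of t X g] t_pos by (auto simp: block_def)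

lemma div_t_less_iff: "X div t < c \<longleftrightarrow> X < c * t"
  using div_less_iff_less_mult[of t X c] t_pos by simp

lemma agent_block_majority: "i < k * b \<Longrightarrow> agent_block i < k"
  using b_pos by (simp add: agent_block_def less_mult_imp_div_less)

lemma agent_block_less: "i < num_agents \<Longrightarrow> agent_block i < 2 * k"
  using agent_block_majority[of i] by (auto simp: agent_block_def split: if_splits)

lemma block_subset: "g < 2 * k \<Longrightarrow> set (block g) \<subseteq> {..<2 * k * t}"
  using mult_le_mono1[of "Suc g" "2 * k" t] by (auto simp: block_def)

lemma length_profile: "length profile = num_agents"
  by (simp add: profile_def)

lemma profile_nth: "i < num_agents \<Longrightarrow> profile ! i = block (agent_block i)"
  by (simp add: profile_def)

lemma profile_nonempty: "profile \<noteq> []"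
  using k_pos by (simp add: profile_def)

lemma top_profile_profile: "top_profile m t profile"
proof -
  have "set (block (agent_block i)) \<subseteq> {..<m}" if "i < num_agents" for i
    using block_subset[OF agent_block_less[OF that]] room by auto
  moreover have "distinct (block g)" for g
    by (simp add: block_def)
  ultimately show ?thesis
    unfolding top_profile_def profile_def by auto
qed

lemma sum_three_ranges:
  "sum g {..<m} = sum g {..<k * t} + sum g {k * t..<2 * k * t} + sum g {2 * k * t..<m}"
  using room sum_lessThan_split[of "k * t" "2 * k * t" g] sum_lessThan_split[of "2 * k * t" m g]
  by simp

subsection \<open>The metric completion\<close>

text \<open>Cluster \<open>0\<close> holds the majority and their blocks, cluster \<open>j + 1\<close> the loner \<open>k b + j\<close> and
  its block, cluster \<open>k + 1\<close> the outside alternatives.\<close>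

definition cluster :: "nat + nat \<Rightarrow> nat" where
  "cluster p = (case p of
      Inl i \<Rightarrow> if i < k * b then 0 else i - k * b + 1
    | Inr X \<Rightarrow> if X < k * t then 0 else if X < 2 * k * t then X div t - k + 1 else k + 1)"

definition hard_metric :: "real \<Rightarrow> nat + nat \<Rightarrow> nat + nat \<Rightarrow> real" where
  "hard_metric R = cluster_metric cluster (k + 1) R"

lemma hard_metric_nonneg: "1 \<le> R \<Longrightarrow> 0 \<le> hard_metric R p q"
  by (simp add: hard_metric_def cluster_metric_def)

lemma hard_metric_majority:
  assumes "i < k * b"
  shows "hard_metric R (Inl i) (Inr X) = (if X < k * t then 0 else if X < 2 * k * t then 1 else R)"
  using assms div_t_less_iff[of X "2 * k"]
  by (auto simp: hard_metric_def cluster_metric_def cluster_def mult.assoc)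

lemma hard_metric_loner:
  assumes "k * b \<le> i" "i < num_agents"
  shows "hard_metric R (Inl i) (Inr X) =
    (if X div t = agent_block i then 0 else if X < 2 * k * t then 1 else R)"
  using assms div_t_less_iff[of X k] div_t_less_iff[of X "2 * k"]
  by (auto simp: hard_metric_def cluster_metric_def cluster_def agent_block_def mult.assoc)

lemma hard_metric_own_block:
  assumes "i < num_agents" "X \<in> set (block (agent_block i))"
  shows "hard_metric R (Inl i) (Inr X) = 0"
proof (cases "i < k * b")
  case True
  then have "X div t < k"
    using assms(2) agent_block_majority[OF True] by (simp add: mem_block)
  then have "X < k * t"
    by (simp add: div_t_less_iff)
  with True show ?thesis by (simp add: hard_metric_majority)
next
  case False
  with assms show ?thesis by (simp add: hard_metric_loner mem_block)
qed

lemma hard_metric_mono_outside_block: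
  assumes "1 \<le> R" "i < num_agents" "X \<le> Y" "Y \<notin> set (block (agent_block i))"
  shows "hard_metric R (Inl i) (Inr X) \<le> hard_metric R (Inl i) (Inr Y)"
proof (cases "i < k * b")
  case True
  with assms show ?thesis by (simp add: hard_metric_majority)
next
  case False
  with assms show ?thesis by (simp add: hard_metric_loner mem_block)
qed

lemma metric_consistent_profile:
  assumes R: "1 \<le> R"
  shows "metric_consistent m t profile (hard_metric R)"
proof -
  interpret top_profile_padding m t profile "\<lambda>_. []"
    by unfold_locales (simp_all add: top_profile_profile)
  let ?\<sigma> = "completion m profile (\<lambda>_. [])"
  have mono: "hard_metric R (Inl i) (Inr (?\<sigma> ! i ! a)) \<le> hard_metric R (Inl i) (Inr (?\<sigma> ! i ! c))"
    if i: "i < num_agents" and ac: "a < c" "c < m" for i a c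
  proof -
    let ?B = "block (agent_block i)"
    have ranking: "?\<sigma> ! i = ?B @ filter (\<lambda>x. x \<notin> set ?B) [0..<m]"
      using i by (simp add: completion_def completed_ranking_def length_profile profile_nth)
    have "hard_metric R (Inl i) (Inr ((?B @ filter (\<lambda>x. x \<notin> set ?B) [0..<m]) ! a))
        \<le> hard_metric R (Inl i) (Inr ((?B @ filter (\<lambda>x. x \<notin> set ?B) [0..<m]) ! c))"
    proof (rule mono_nth_append_filter_upt)
      show "c < length (?B @ filter (\<lambda>x. x \<notin> set ?B) [0..<m])"
        using ac ranking length_completion_nth[of i] i by (simp add: length_profile)
    qed (use i ac R hard_metric_own_block hard_metric_mono_outside_block hard_metric_nonneg
      in simp_all)
    then show ?thesis by (simp only: ranking)
  qed
  have "length ?\<sigma> = num_agents"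
    by (simp add: completion_def length_profile)
  moreover have "pseudometric_on S (hard_metric R)" for S
    using pseudometric_cluster_metric[OF R] by (simp add: hard_metric_def)
  ultimately show ?thesis
    unfolding metric_consistent_def
  proof (intro exI[of _ ?\<sigma>] conjI full_profile_completion extends_completion)
    show "metric_consistent_full m ?\<sigma> (hard_metric R)"
      unfolding metric_consistent_full_def
      using mono \<open>length ?\<sigma> = num_agents\<close> \<open>\<And>S. pseudometric_on S (hard_metric R)\<close> by simp
  qed
qed

lemma SC_split:
  "SC num_agents d X = (\<Sum>i<k * b. d (Inl i) (Inr X)) + (\<Sum>i\<in>{k * b..<num_agents}. d (Inl i) (Inr X))"
  unfolding SC_def by (rule sum_lessThan_split) simp

lemma SC_shared:
  assumes "X < k * t"
  shows "SC num_agents (hard_metric R) X = k"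
proof -
  have "hard_metric R (Inl i) (Inr X) = 1" if "i \<in> {k * b..<num_agents}" for i
  proof -
    have "X div t < k" using assms div_t_less_iff by simp
    moreover have "k \<le> agent_block i" using that by (auto simp: agent_block_def)
    ultimately show ?thesis using that assms by (simp add: hard_metric_loner)
  qed
  then show ?thesis
    using assms by (simp add: SC_split hard_metric_majority)
qed

lemma SC_lone:
  assumes "k * t \<le> X" "X < 2 * k * t" "1 \<le> R"
  shows "k * b \<le> SC num_agents (hard_metric R) X"
proof -
  have "(\<Sum>i<k * b. hard_metric R (Inl i) (Inr X)) = (\<Sum>i<k * b. 1)"
    using assms by (intro sum.cong) (simp_all add: hard_metric_majority)
  moreover have "0 \<le> (\<Sum>i\<in>{k * b..<num_agents}. hard_metric R (Inl i) (Inr X))"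
    using assms(3) by (intro sum_nonneg hard_metric_nonneg)
  ultimately show ?thesis by (simp add: SC_split)
qed

lemma SC_outside:
  assumes "2 * k * t \<le> X"
  shows "SC num_agents (hard_metric R) X = real num_agents * R"
proof -
  have "hard_metric R (Inl i) (Inr X) = R" if "i < num_agents" for i
  proof (cases "i < k * b")
    case False
    have "agent_block i < 2 * k" using agent_block_less[OF that] .
    moreover have "2 * k \<le> X div t" using assms div_t_less_iff[of X "2 * k"] by (simp add: mult.assoc)
    ultimately show ?thesis using False that assms by (simp add: hard_metric_loner)
  qed (use assms in \<open>simp add: hard_metric_majority\<close>)
  then show ?thesis by (simp add: SC_def)
qed

lemma SC_pos:
  assumes "1 \<le> R"
  shows "0 < SC num_agents (hard_metric R) X"
proof -
  consider "X < k * t" | "k * t \<le> X" "X < 2 * k * t" | "2 * k * t \<le> X" by linarith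
  then show ?thesis
  proof cases
    case 1
    then show ?thesis using k_pos by (simp add: SC_shared)
  next
    case 2
    have "0 < real (k * b)" using k_pos b_pos by simp
    also have "\<dots> \<le> SC num_agents (hard_metric R) X" using SC_lone[OF 2 assms] .
    finally show ?thesis .
  next
    case 3
    have "0 < real num_agents" using k_pos by linarith
    then show ?thesis using 3 assms by (simp add: SC_outside)
  qed
qed

lemma metric_distortion_constraint:
  fixes D R :: real and f :: "nat list list \<Rightarrow> nat \<Rightarrow> real"
  assumes D: "0 \<le> D" and R: "1 \<le> R" and rule: "is_rule m t f"
    and md: "metric_distortion m t f \<le> ereal D"
  shows "k * b * (\<Sum>X\<in>{k * t..<2 * k * t}. f profile X)
      + num_agents * R * (\<Sum>X\<in>{2 * k * t..<m}. f profile X) \<le> D * k"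
proof -
  let ?SC = "SC num_agents (hard_metric R)" and ?f = "f profile"
  have f_nonneg: "0 \<le> ?f X" for X
    using rule top_profile_profile unfolding is_rule_def by blast
  have "(\<Sum>X<m. ?f X * ?SC X) \<le> D * ?SC 0"
    using expected_SC_le_metric_distortion[OF md D top_profile_profile profile_nonempty
        metric_consistent_profile[OF R], where X = 0] room SC_pos[OF R]
    by (simp add: length_profile)
  also have "\<dots> = D * k"
    using k_pos t_pos by (simp add: SC_shared)
  finally have expected: "(\<Sum>X<m. ?f X * ?SC X) \<le> D * k" .
  have "0 \<le> (\<Sum>X<k * t. ?f X * ?SC X)"
    using f_nonneg SC_pos[OF R] by (intro sum_nonneg) (simp add: less_imp_le)
  moreover have "k * b * (\<Sum>X\<in>{k * t..<2 * k * t}. ?f X) \<le> (\<Sum>X\<in>{k * t..<2 * k * t}. ?f X * ?SC X)"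
    unfolding sum_distrib_left
  proof (intro sum_mono)
    fix X assume "X \<in> {k * t..<2 * k * t}"
    then have "real (k * b) \<le> ?SC X" using SC_lone R by simp
    then have "real (k * b) * ?f X \<le> ?SC X * ?f X"
      using f_nonneg by (rule mult_right_mono)
    then show "real (k * b) * ?f X \<le> ?f X * ?SC X"
      by (simp only: mult.commute)
  qed
  moreover have "num_agents * R * (\<Sum>X\<in>{2 * k * t..<m}. ?f X) = (\<Sum>X\<in>{2 * k * t..<m}. ?f X * ?SC X)"
    unfolding sum_distrib_left by (intro sum.cong) (simp_all add: SC_outside)
  ultimately show ?thesis
    using expected sum_three_ranges[of "\<lambda>X. ?f X * ?SC X"] by linarith
qed

lemma metric_distortion_mass_bounds:
  fixes D :: real and f :: "nat list list \<Rightarrow> nat \<Rightarrow> real"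
  assumes D: "1 \<le> D" and rule: "is_rule m t f" and md: "metric_distortion m t f \<le> ereal D"
  shows "(\<Sum>X\<in>{k * t..<2 * k * t}. f profile X) \<le> D / b"
    and "(\<Sum>X\<in>{2 * k * t..<m}. f profile X) * num_agents \<le> 1 / width"
proof -
  define FA where "FA = (\<Sum>X\<in>{k * t..<2 * k * t}. f profile X)"
  define FU where "FU = (\<Sum>X\<in>{2 * k * t..<m}. f profile X)"
  have "0 \<le> FA" "0 \<le> FU"
    using rule top_profile_profile unfolding is_rule_def FA_def FU_def by (simp_all add: sum_nonneg)
  have pos: "1 \<le> real width" "0 < real b" "0 < real k"
    using t_pos b_pos k_pos by simp_all
  have R: "1 \<le> D * k * width"
  proof -
    have "1 * 1 * 1 \<le> D * k * width"
      using D pos k_pos by (intro mult_mono) simp_all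
    then show ?thesis by simp
  qed
  have constraint: "k * b * FA + num_agents * (D * k * width) * FU \<le> D * k"
    using metric_distortion_constraint[OF _ R rule md] D
    unfolding FA_def[symmetric] FU_def[symmetric] by simp
  have "0 \<le> num_agents * (D * k * width) * FU" "0 \<le> k * b * FA"
    using R \<open>0 \<le> FU\<close> \<open>0 \<le> FA\<close> by simp_all
  then have "k * b * FA \<le> D * k"
    using constraint by linarith
  then have "b * FA * k \<le> D * k"
    by (simp add: ac_simps)
  then show "FA \<le> D / b"
    using pos by (simp add: pos_le_divide_eq mult.commute)
  have "num_agents * (D * k * width) * FU = (real num_agents * width * FU) * (D * k)"
    by (simp only: ac_simps)
  then have "(real num_agents * width * FU) * (D * k) \<le> 1 * (D * k)"
    using constraint \<open>0 \<le> k * b * FA\<close> by linarith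
  then have "real num_agents * width * FU \<le> 1"
    using D pos by (simp add: mult_le_cancel_right_pos)
  then show "FU * num_agents \<le> 1 / width"
    using pos by (simp add: pos_le_divide_eq ac_simps)
qed

subsection \<open>The utilitarian completion\<close>

definition padding :: "nat \<Rightarrow> nat list" where
  "padding i = (if i < k * b then [2 * k * t..<m] else [2 * k * t])"

definition hard_utility :: "nat \<Rightarrow> nat \<Rightarrow> real" where
  "hard_utility = prefix_uniform profile padding"

lemma util_consistent_profile: "util_consistent m t profile hard_utility"
proof -
  interpret top_profile_padding m t profile padding
  proof
    fix i assume "i < length profile"
    then have "set (profile ! i) \<subseteq> {..<2 * k * t}"
      using block_subset agent_block_less by (simp add: length_profile profile_nth)
    then show "set (profile ! i) \<inter> set (padding i) = {}"
      by (auto simp: padding_def)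
  qed (use top_profile_profile room in \<open>auto simp: padding_def\<close>)
  show ?thesis
    unfolding hard_utility_def using t_pos by (rule util_consistent_prefix_uniform)
qed

lemma hard_utility_majority:
  assumes "i < k * b" "X < m"
  shows "hard_utility i X = (if X div t = agent_block i \<or> 2 * k * t \<le> X then 1 / width else 0)"
  using assms room
  by (simp add: hard_utility_def prefix_uniform_def padding_def profile_nth mem_block)

lemma hard_utility_loner:
  assumes "k * b \<le> i" "i < num_agents"
  shows "hard_utility i X = (if X div t = agent_block i \<or> X = 2 * k * t then 1 / (t + 1) else 0)"
  using assms
  by (simp add: hard_utility_def prefix_uniform_def padding_def profile_nth mem_block)

lemma hard_utility_le_one: "hard_utility i X \<le> 1"
proof -
  have "1 / real n \<le> 1" for n :: nat
    by (cases n) simp_all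
  then show ?thesis
    unfolding hard_utility_def prefix_uniform_def by (simp del: of_nat_add)
qed

lemma hard_utility_nonneg: "0 \<le> hard_utility i X"
  by (simp add: hard_utility_def prefix_uniform_def)

lemma SW_split:
  "SW num_agents u X = (\<Sum>i<k * b. u i X) + (\<Sum>i\<in>{k * b..<num_agents}. u i X)"
  unfolding SW_def by (rule sum_lessThan_split) simp

lemma SW_first_outside: "k / real (t + 1) \<le> SW num_agents hard_utility (2 * k * t)"
proof -
  have "(\<Sum>i\<in>{k * b..<num_agents}. hard_utility i (2 * k * t)) = (\<Sum>i\<in>{k * b..<num_agents}. 1 / (t + 1))"
    by (intro sum.cong) (simp_all add: hard_utility_loner)
  moreover have "0 \<le> (\<Sum>i<k * b. hard_utility i (2 * k * t))"
    by (intro sum_nonneg hard_utility_nonneg)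
  ultimately show ?thesis by (simp add: SW_split)
qed

lemma SW_shared:
  assumes "X < k * t"
  shows "SW num_agents hard_utility X = b / width"
proof -
  have X: "X div t < k" "X < m" using assms room div_t_less_iff by auto
  have "(\<Sum>i<k * b. hard_utility i X) = (\<Sum>i<k * b. if i div b = X div t then 1 / width else 0)"
    using assms X by (intro sum.cong) (auto simp: hard_utility_majority agent_block_def)
  also have "\<dots> = b / width"
    using card_div_eq[OF _ X(1), of b] b_pos by (simp add: sum_if_const)
  finally have "(\<Sum>i<k * b. hard_utility i X) = b / width" .
  moreover have "(\<Sum>i\<in>{k * b..<num_agents}. hard_utility i X) = 0"
    using assms X by (intro sum.neutral) (auto simp: hard_utility_loner agent_block_def)
  ultimately show ?thesis by (simp add: SW_split)
qed

lemma SW_lone: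
  assumes "k * t \<le> X" "X < 2 * k * t"
  shows "SW num_agents hard_utility X = 1 / (t + 1)"
proof -
  have X: "k \<le> X div t" "X div t < 2 * k" "X < m"
    using assms room div_t_less_iff[of X k] div_t_less_iff[of X "2 * k"] by (auto simp: mult.assoc)
  have "(\<Sum>i<k * b. hard_utility i X) = 0"
    using X assms by (intro sum.neutral) (auto simp: hard_utility_majority dest: agent_block_majority)
  moreover have "{i \<in> {k * b..<num_agents}. agent_block i = X div t} = {k * b + (X div t - k)}"
    using X by (auto simp: agent_block_def)
  then have "(\<Sum>i\<in>{k * b..<num_agents}. hard_utility i X) = 1 / (t + 1)"
    using assms by (simp add: hard_utility_loner sum_if_const eq_commute[of "_ div t"])
  ultimately show ?thesis by (simp add: SW_split)
qed

lemma SW_le_num_agents: "SW num_agents hard_utility X \<le> num_agents"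
  using sum_mono[of "{..<num_agents}" "\<lambda>i. hard_utility i X" "\<lambda>_. 1"] hard_utility_le_one
  by (simp add: SW_def)

lemma expected_SW_le:
  fixes D :: real and f :: "nat list list \<Rightarrow> nat \<Rightarrow> real"
  assumes D: "1 \<le> D" and rule: "is_rule m t f" and md: "metric_distortion m t f \<le> ereal D"
  shows "(\<Sum>X<m. f profile X * SW num_agents hard_utility X)
    \<le> 2 * real b / width + D / (real b * real (t + 1))"
proof -
  let ?f = "f profile" and ?SW = "SW num_agents hard_utility"
  define FB where "FB = (\<Sum>X<k * t. ?f X)"
  define FA where "FA = (\<Sum>X\<in>{k * t..<2 * k * t}. ?f X)"
  define FU where "FU = (\<Sum>X\<in>{2 * k * t..<m}. ?f X)"
  have f_nonneg: "0 \<le> ?f X" for X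
    using rule top_profile_profile unfolding is_rule_def by blast
  have "FB + FA + FU = 1"
    using rule top_profile_profile sum_three_ranges[of ?f]
    unfolding is_rule_def FB_def FA_def FU_def by simp
  moreover have "0 \<le> FB" "0 \<le> FA" "0 \<le> FU"
    unfolding FB_def FA_def FU_def using f_nonneg by (simp_all add: sum_nonneg)
  ultimately have "FB \<le> 1" by linarith
  have "(\<Sum>X<k * t. ?f X * ?SW X) = FB * (b / width)"
    unfolding FB_def sum_distrib_right by (intro sum.cong) (simp_all add: SW_shared)
  moreover have "(\<Sum>X\<in>{k * t..<2 * k * t}. ?f X * ?SW X) = FA * (1 / (t + 1))"
    unfolding FA_def sum_distrib_right by (intro sum.cong) (simp_all add: SW_lone)
  moreover have "(\<Sum>X\<in>{2 * k * t..<m}. ?f X * ?SW X) \<le> FU * num_agents"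
    unfolding FU_def sum_distrib_right
    using f_nonneg SW_le_num_agents by (intro sum_mono mult_left_mono) simp_all
  ultimately have "(\<Sum>X<m. ?f X * ?SW X) \<le> FB * (b / width) + FA * (1 / (t + 1)) + FU * num_agents"
    using sum_three_ranges[of "\<lambda>X. ?f X * ?SW X"] by linarith
  also have "\<dots> \<le> b / width + D / (real b * real (t + 1)) + b / width"
  proof (intro add_mono)
    show "FB * (b / width) \<le> b / width"
      using \<open>FB \<le> 1\<close> \<open>0 \<le> FB\<close> by (intro mult_left_le_one_le) simp_all
    have "FA * (1 / (t + 1)) \<le> D / b * (1 / (t + 1))"
      using metric_distortion_mass_bounds(1)[OF D rule md, folded FA_def] by (rule mult_right_mono) simp
    then show "FA * (1 / (t + 1)) \<le> D / (real b * real (t + 1))"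
      by simp
    show "FU * num_agents \<le> b / width"
      using metric_distortion_mass_bounds(2)[OF D rule md] t_pos b_pos unfolding FU_def[symmetric]
      by (simp add: divide_right_mono order.trans)
  qed
  finally show ?thesis by simp
qed

lemma util_distortion_lower_bound:
  fixes D :: real and f :: "nat list list \<Rightarrow> nat \<Rightarrow> real"
  assumes D: "1 \<le> D" and rule: "is_rule m t f" and md: "metric_distortion m t f \<le> ereal D"
  shows "ereal (k / real (t + 1) / (2 * real b / width + D / (real b * real (t + 1))))
    \<le> util_distortion m t f"
proof (rule util_distortion_ge_ratio[OF rule top_profile_profile profile_nonempty util_consistent_profile])
  show "(\<Sum>Y<m. f profile Y * SW (length profile) hard_utility Y)
      \<le> 2 * real b / width + D / (real b * real (t + 1))"
    using expected_SW_le[OF D rule md] by (simp add: length_profile)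
qed (use room k_pos SW_first_outside in \<open>simp_all add: length_profile\<close>)

end

section \<open>Choice of the parameters\<close>

lemma ratio_lower_bound:
  fixes M T D K W B s :: real
  assumes T: "1 \<le> T" and D: "1 \<le> D" and M: "6 * T \<le> M" and K: "M / (6 * T) \<le> K"
    and W: "M / 3 \<le> W" and s: "s = sqrt (M / T)" and B: "s \<le> B" "B \<le> 2 * s"
  shows "1 / 156 * (M * sqrt M) / (D * (T * sqrt T)) \<le> (K / (T + 1)) / (2 * B / W + D / (B * (T + 1)))"
proof -
  have "0 < T" "0 < M" using T M by auto
  then have "0 < s" using s by simp
  have pos: "0 < T" "0 < M" "0 < s" "0 < W" "0 < B"
    using \<open>0 < T\<close> \<open>0 < M\<close> \<open>0 < s\<close> W B by auto
  have M_eq: "M = s * s * T"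
    using s pos by simp
  have sqrt_M: "sqrt M = s * sqrt T"
    using s pos by (simp add: real_sqrt_divide)
  have "2 * B / W \<le> 2 * (2 * s) / (M / 3)"
    using B W pos by (intro frac_le) auto
  also have "\<dots> = 12 / (s * T)"
    using pos by (simp add: M_eq field_simps)
  also have "\<dots> \<le> 12 * D / (s * T)"
    using D pos by (simp add: divide_right_mono)
  finally have "2 * B / W \<le> 12 * D / (s * T)" .
  moreover have "D / (B * (T + 1)) \<le> D / (s * T)"
    using B D pos by (intro divide_left_mono mult_mono) auto
  ultimately have "2 * B / W + D / (B * (T + 1)) \<le> 12 * D / (s * T) + D / (s * T)"
    by (rule add_mono)
  also have "\<dots> = 13 * D / (s * T)"
    by (simp add: add_divide_distrib[symmetric])
  finally have denominator: "2 * B / W + D / (B * (T + 1)) \<le> 13 * D / (s * T)" .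
  have "M / (12 * T * T) = (M / (6 * T)) / (2 * T)"
    using pos by (simp add: field_simps)
  also have "\<dots> \<le> K / (T + 1)"
  proof (intro frac_le)
    have "0 < M / (6 * T)" using pos by simp
    with K show "0 \<le> K" by linarith
  qed (use K T pos in auto)
  finally have numerator: "M / (12 * T * T) \<le> K / (T + 1)" .
  have "1 / 156 * (M * sqrt M) / (D * (T * sqrt T)) = (M / (12 * T * T)) / (13 * D / (s * T))"
    unfolding sqrt_M using pos D by (simp add: M_eq field_simps)
  also have "\<dots> \<le> (K / (T + 1)) / (2 * B / W + D / (B * (T + 1)))"
  proof (rule frac_le)
    have "0 \<le> M / (12 * T * T)" using pos by simp
    with numerator show "0 \<le> K / (T + 1)" by linarith
    show "0 < 2 * B / W + D / (B * (T + 1))"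
      using pos D by (intro add_pos_pos) simp_all
  qed (fact numerator denominator)+
  finally show ?thesis .
qed

lemma small_ratio_le_one:
  fixes D :: real and m t :: nat
  assumes t: "1 \<le> t" and m: "m < 6 * t" and D: "1 \<le> D"
  shows "1 / 156 * (m * sqrt m) / (D * (t * sqrt t)) \<le> 1"
proof -
  have pos: "0 < real t * sqrt t" using t by simp
  have "sqrt m \<le> sqrt (9 * t)" using m by simp
  then have "sqrt m \<le> 3 * sqrt t" by (simp add: real_sqrt_mult)
  moreover have "real m \<le> 6 * t" using m by simp
  ultimately have "m * sqrt m \<le> (6 * t) * (3 * sqrt t)"
    by (intro mult_mono) auto
  also have "\<dots> \<le> 156 * (D * (t * sqrt t))"
    using mult_right_mono[OF D, of "t * sqrt t"] pos by linarith
  finally show ?thesis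
    using D pos by (simp add: divide_le_eq)
qed

lemma group_count_bounds:
  fixes m t :: nat
  assumes t: "1 \<le> t" and m: "6 * t \<le> m"
  defines "k \<equiv> m div (3 * t)"
  shows "2 \<le> k" "2 * k * t < m" "real m / (6 * real t) \<le> k" "real m / 3 \<le> real (t + (m - 2 * k * t))"
proof -
  show "2 \<le> k"
    using div_le_mono[OF m, of "3 * t"] t by (simp add: k_def)
  have lower: "3 * (k * t) \<le> m"
    using div_times_less_eq_dividend[of m "3 * t"] by (simp add: k_def ac_simps)
  have upper: "m < 3 * (t * k) + 3 * t"
    using t dividend_less_div_times[of "3 * t" m] by (simp add: k_def ac_simps)
  have "2 * (k * t) < 3 * (k * t)"
    using \<open>2 \<le> k\<close> t by simp
  then show "2 * k * t < m"
    using lower by (simp only: ac_simps)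
  have "t \<le> t * k"
    using \<open>2 \<le> k\<close> by simp
  with upper have "m \<le> 6 * (t * k)"
    by linarith
  then have "real m \<le> real (6 * (t * k))"
    by (simp only: of_nat_le_iff)
  then show "real m / (6 * real t) \<le> k"
    using t by (simp add: divide_le_eq ac_simps)
  have "m \<le> 3 * (t + (m - 2 * k * t))"
    using lower by (simp only: mult.assoc) arith
  then show "real m / 3 \<le> real (t + (m - 2 * k * t))"
    by simp
qed

lemma util_distortion_large_m:
  fixes D :: real and f :: "nat list list \<Rightarrow> nat \<Rightarrow> real"
  assumes t: "1 \<le> t" and m: "6 * t \<le> m" and D: "1 \<le> D"
    and rule: "is_rule m t f" and md: "metric_distortion m t f \<le> ereal D"
  shows "ereal (1 / 156 * (m * sqrt m) / (D * (t * sqrt t))) \<le> util_distortion m t f"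
proof -
  define k where "k = m div (3 * t)"
  define s where "s = sqrt (m / t)"
  define b where "b = nat \<lceil>s\<rceil>"
  note k = group_count_bounds[OF t m, folded k_def]
  have "1 \<le> s" using m t by (simp add: s_def le_divide_eq)
  then have b: "s \<le> b" "b \<le> 2 * s" "1 \<le> b"
    unfolding b_def by linarith+
  interpret hard_instance k b t m
    using t k b by unfold_locales auto
  have "1 / 156 * (m * sqrt m) / (D * (t * sqrt t))
      \<le> k / (real t + 1) / (2 * real b / width + D / (real b * (real t + 1)))"
    by (rule ratio_lower_bound[OF _ D _ k(3,4) s_def b(1,2)]) (use t m in simp_all)
  then have "ereal (1 / 156 * (m * sqrt m) / (D * (t * sqrt t)))
      \<le> ereal (k / real (t + 1) / (2 * real b / width + D / (real b * real (t + 1))))"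
    by (simp add: add.commute)
  also have "\<dots> \<le> util_distortion m t f"
    by (rule util_distortion_lower_bound[OF D rule md])
  finally show ?thesis .
qed

theorem mainTheorem10:
  "\<exists>c>0. \<forall>m t (D::real) f.
     1 \<le> t \<longrightarrow> t \<le> m \<longrightarrow> D \<ge> 1 \<longrightarrow> is_rule m t f \<longrightarrow>
     metric_distortion m t f \<le> ereal D \<longrightarrow>
     util_distortion m t f \<ge> ereal (c * (real m * sqrt (real m)) / (D * (real t * sqrt (real t))))"
proof (intro exI[of _ "1 / 156"] conjI allI impI)
  fix m t :: nat and D :: real and f :: "nat list list \<Rightarrow> nat \<Rightarrow> real"
  assume t: "1 \<le> t" "t \<le> m" and D: "1 \<le> D" and rule: "is_rule m t f"
    and md: "metric_distortion m t f \<le> ereal D"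
  show "ereal (1 / 156 * (m * sqrt m) / (D * (t * sqrt t))) \<le> util_distortion m t f"
  proof (cases "6 * t \<le> m")
    case True
    then show ?thesis by (rule util_distortion_large_m[OF t(1) _ D rule md])
  next
    case False
    then have "ereal (1 / 156 * (m * sqrt m) / (D * (t * sqrt t))) \<le> 1"
      using t D small_ratio_le_one by (simp add: one_ereal_def)
    also have "1 \<le> util_distortion m t f"
      using t rule by (rule util_distortion_ge_one)
    finally show ?thesis .
  qed
qed simp

end
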